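(* Let $n\ge1$, $p\ge2$, and let $\mathbf X\in\mathbb R^{n\times p}$ have i.i.d.\ rows $\mathcal N_p(0,\Sigma^* )$ with $\Sigma^*$ positive definite; let $\Omega^*=(\Sigma^* )^{-1}=(\omega^*_{ij})$, $\phi^*_j=1/\omega^*_{jj}$, $B^*_{ij}=\omega^*_{ij}/\omega^*_{jj}$, $S_n=\frac1n\mathbf X^\top\mathbf X$. Let $\mathscr G^*$ be the graph on $[p]$ with an edge between $i\neq j$ iff $\omega^*_{ij}\neq0$, and write $i\sim j$ if $i,j$ lie in the same connected component. For $j\in[p]$ let $\Delta^*_j$ be the diagonal $p\times p$ matrix with $$(\Delta^*_j)_{ii}=\mathbf 1(i\sim j)\prod_{1\le h<q}\frac{B^*_{v_{h+1},v_h}}{B^*_{v_h,v_{h+1}}},$$ where $(v_1=j,v_2,\dots,v_q=i)$ is any path from $j$ to $i$ in $\mathscr G^*$ (the value is independent of the path and equals $\phi^*_j/\phi^*_i$ when $i\sim j$). For $j$ in a connected component $c$ of cardinality $p_c$, define $$\hat\phi^{\rm SML}_j=\frac1{p_c}\,\mathrm{trace}\big(\Delta^*_jS_nB^*\big).$$ Then $\mathbf E\big[(\hat\phi^{\rm SML}_j-\phi^*_j)^2\big]=\dfrac{2(\phi^*_j)^2}{np_c}$.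
   Context: $[p]=\{1,\dots,p\}$; $\mathbf 1(\cdot)$ is the indicator function. A path is a sequence of distinct vertices in which consecutive vertices are joined by an edge of $\mathscr G^*$; for $i=j$ the empty product equals $1$. *)

theory Defs
  imports "HOL-Analysis.Analysis" "HOL-Probability.Probability"
begin

definition pos_def_mat :: "real^'p^'p \<Rightarrow> bool" where
  "pos_def_mat S \<longleftrightarrow> transpose S = S \<and> (\<forall>x. x \<noteq> 0 \<longrightarrow> x \<bullet> (S *v x) > 0)"

definition mvn_density :: "real^'p^'p \<Rightarrow> real^'p \<Rightarrow> real" where
  "mvn_density S x =
     exp (- (x \<bullet> (matrix_inv S *v x)) / 2) / sqrt ((2 * pi) ^ CARD('p) * det S)"

definition Omega :: "real^'p^'p \<Rightarrow> real^'p^'p" where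
  "Omega S = matrix_inv S"

definition phi :: "real^'p^'p \<Rightarrow> 'p \<Rightarrow> real" where
  "phi S j = 1 / (Omega S $ j $ j)"

definition Bmat :: "real^'p^'p \<Rightarrow> real^'p^'p" where
  "Bmat S = (\<chi> i j. Omega S $ i $ j / Omega S $ j $ j)"

definition gedge :: "real^'p^'p \<Rightarrow> 'p \<Rightarrow> 'p \<Rightarrow> bool" where
  "gedge S i j \<longleftrightarrow> i \<noteq> j \<and> Omega S $ i $ j \<noteq> 0"

definition gpath :: "real^'p^'p \<Rightarrow> 'p \<Rightarrow> 'p \<Rightarrow> 'p list \<Rightarrow> bool" where
  "gpath S a b vs \<longleftrightarrow> vs \<noteq> [] \<and> hd vs = a \<and> last vs = b \<and> distinct vs \<and>
     (\<forall>h. Suc h < length vs \<longrightarrow> gedge S (vs ! h) (vs ! Suc h))"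

definition same_comp :: "real^'p^'p \<Rightarrow> 'p \<Rightarrow> 'p \<Rightarrow> bool" where
  "same_comp S i j \<longleftrightarrow> (\<exists>vs. gpath S j i vs)"

definition path_ratio :: "real^'p^'p \<Rightarrow> 'p list \<Rightarrow> real" where
  "path_ratio S vs = (\<Prod>h<length vs - 1.
      Bmat S $ (vs ! Suc h) $ (vs ! h) / Bmat S $ (vs ! h) $ (vs ! Suc h))"

text \<open>Delta*_j (diagonal); some path from j to i is chosen (the value is path-independent).\<close>
definition Delta :: "real^'p^'p \<Rightarrow> 'p \<Rightarrow> real^'p^'p" where
  "Delta S j = (\<chi> i k. if i = k then
       (if same_comp S i j then path_ratio S (SOME vs. gpath S j i vs) else 0) else 0)"

text \<open>Sample covariance S_n = (1/n) X^T X, the rows of X being X 0, ..., X (n-1).\<close>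
definition sample_cov :: "nat \<Rightarrow> (nat \<Rightarrow> real^'p) \<Rightarrow> real^'p^'p" where
  "sample_cov n X = (\<chi> a b. (\<Sum>k<n. X k $ a * X k $ b) / real n)"

definition comp_size :: "real^'p^'p \<Rightarrow> 'p \<Rightarrow> nat" where
  "comp_size S j = card {i. same_comp S i j}"

definition phi_SML :: "real^'p^'p \<Rightarrow> nat \<Rightarrow> (nat \<Rightarrow> real^'p) \<Rightarrow> 'p \<Rightarrow> real" where
  "phi_SML S n X j = trace (Delta S j ** sample_cov n X ** Bmat S) / real (comp_size S j)"

end

theory Submission
  imports Defs
begin

text \<open>Since \<open>\<Omega>\<^sup>*\<close> has no entries between a connected component \<open>C\<close> of \<open>\<G>\<^sup>*\<close> and its
  complement, the path products telescope to \<open>\<phi>\<^sup>*\<^sub>j/\<phi>\<^sup>*\<^sub>i\<close> and the estimator becomes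
  \<open>\<phi>\<^sup>*\<^sub>j/(n p\<^sub>c) \<Sum>\<^sub>m Q\<^sub>m\<close>, where \<open>Q\<^sub>m = x\<^sub>C\<^sup>T \<Omega>\<^sup>*\<^sub>C\<^sub>C x\<^sub>C\<close> is the quadratic form of the
  \<open>m\<close>-th sample restricted to \<open>C\<close>. Each \<open>Q\<^sub>m\<close> is \<open>\<chi>\<^sup>2\<close> with \<open>p\<^sub>c\<close> degrees of freedom, so it has
  mean \<open>p\<^sub>c\<close> and variance \<open>2 p\<^sub>c\<close>, and independence of the samples gives the variance
  \<open>2 (\<phi>\<^sup>*\<^sub>j)\<^sup>2 / (n p\<^sub>c)\<close>.

  The two \<open>\<chi>\<^sup>2\<close> moments are obtained without computing any distribution: the Gaussian density
  factors as \<open>exp (-Q/2) \<cdot> W\<close> with \<open>W\<close> invariant under scaling the coordinates in \<open>C\<close>, and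
  scaling them by \<open>\<surd>r\<close> multiplies \<open>Q\<close> by \<open>r\<close> and Lebesgue measure by \<open>r\<^bsup>p\<^sub>c/2\<^esup>\<close>. This
  homogeneity yields the Gamma-function recursion \<open>E[-Q \<phi>'(Q)] = (p\<^sub>c/2) E[\<phi>(Q)]\<close>, which is
  applied twice.\<close>

lemma pos_def_mat_Omega_inverse:
  fixes S :: "real^'p^'p"
  assumes "pos_def_mat S"
  shows "S ** Omega S = mat 1" and "Omega S ** S = mat 1"
proof -
  have "\<forall>x. S *v x = 0 \<longrightarrow> x = 0"
    using assms unfolding pos_def_mat_def by (metis inner_zero_right less_irrefl)
  then have "invertible S"
    by (metis matrix_left_invertible_ker invertible_left_inverse)
  then have "S ** Omega S = mat 1 \<and> Omega S ** S = mat 1"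
    unfolding Omega_def matrix_inv_def invertible_def by (rule someI_ex)
  then show "S ** Omega S = mat 1" and "Omega S ** S = mat 1" by auto
qed

lemma Omega_symmetric:
  fixes S :: "real^'p^'p"
  assumes "pos_def_mat S"
  shows "Omega S $ a $ b = Omega S $ b $ a"
proof -
  note inv = pos_def_mat_Omega_inverse[OF assms]
  have St: "transpose S = S" using assms by (simp add: pos_def_mat_def)
  have "transpose (Omega S) ** S = mat 1"
    using arg_cong[OF inv(1), of transpose] by (simp add: matrix_transpose_mul St)
  then have "transpose (Omega S) = Omega S"
    by (metis inv(1) matrix_mul_assoc matrix_mul_lid matrix_mul_rid)
  then show ?thesis by (metis transpose_def vec_lambda_beta)
qed

lemma Omega_quadratic_pos:
  fixes S :: "real^'p^'p"
  assumes "pos_def_mat S" and "x \<noteq> 0"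
  shows "x \<bullet> (Omega S *v x) > 0"
proof -
  define y where "y = Omega S *v x"
  have x: "x = S *v y"
    unfolding y_def by (simp add: matrix_vector_mul_assoc pos_def_mat_Omega_inverse[OF assms(1)])
  with assms(2) have "y \<noteq> 0" by auto
  moreover have "Omega S *v x = y" by (simp add: y_def)
  then have "x \<bullet> (Omega S *v x) = y \<bullet> (S *v y)"
    by (simp add: x inner_commute)
  ultimately show ?thesis using assms(1) by (simp add: pos_def_mat_def)
qed

lemma Omega_quadratic_nonneg:
  fixes S :: "real^'p^'p"
  assumes "pos_def_mat S"
  shows "x \<bullet> (Omega S *v x) \<ge> 0"
  using Omega_quadratic_pos[OF assms, of x] by (cases "x = 0") auto

lemma Omega_diag_pos:
  fixes S :: "real^'p^'p"
  assumes "pos_def_mat S"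
  shows "Omega S $ i $ i > 0"
  using Omega_quadratic_pos[OF assms, of "axis i 1"]
  by (simp add: axis_eq_0_iff matrix_vector_mult_basis inner_axis' column_def)

section \<open>Paths and connected components\<close>

lemma same_comp_refl: "same_comp S j j"
  unfolding same_comp_def gpath_def by (rule exI[of _ "[j]"]) auto

lemma gpath_append_gedge:
  assumes "gpath S a b vs" and "c \<notin> set vs" and "gedge S b c"
  shows "gpath S a c (vs @ [c])"
  unfolding gpath_def
proof (intro conjI allI impI)
  show "distinct (vs @ [c])" and "hd (vs @ [c]) = a"
    using assms(1,2) by (auto simp: gpath_def)
  fix h assume h: "Suc h < length (vs @ [c])"
  show "gedge S ((vs @ [c]) ! h) ((vs @ [c]) ! Suc h)"
  proof (cases "Suc h < length vs")
    case True then show ?thesis using assms(1) by (auto simp: gpath_def nth_append)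
  next
    case False
    with h have "Suc h = length vs" by auto
    moreover from this have "vs ! h = b"
      using assms(1) unfolding gpath_def by (metis diff_Suc_1 last_conv_nth)
    ultimately show ?thesis using assms(3) by (auto simp: nth_append)
  qed
qed auto

lemma gpath_take:
  assumes "gpath S a b vs" and "k < length vs"
  shows "gpath S a (vs ! k) (take (Suc k) vs)"
proof -
  have ne: "take (Suc k) vs \<noteq> []" using assms(2) by (cases vs) auto
  have "hd (take (Suc k) vs) = hd vs" using assms(2) by (cases vs) auto
  moreover have "last (take (Suc k) vs) = vs ! k" using assms(2) ne by (simp add: last_conv_nth)
  ultimately show ?thesis
    using assms unfolding gpath_def by (simp add: ne)
qed

lemma same_comp_gedge:
  assumes "same_comp S i j" and "gedge S i k"
  shows "same_comp S k j"
proof -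
  obtain vs where vs: "gpath S j i vs" using assms(1) by (auto simp: same_comp_def)
  show ?thesis
  proof (cases "k \<in> set vs")
    case True
    then obtain h where "h < length vs" "k = vs ! h" by (auto simp: in_set_conv_nth)
    then show ?thesis using gpath_take[OF vs] by (auto simp: same_comp_def)
  next
    case False
    then show ?thesis using gpath_append_gedge[OF vs False assms(2)] by (auto simp: same_comp_def)
  qed
qed

lemma path_ratio_eq:
  fixes S :: "real^'p^'p"
  assumes S: "pos_def_mat S" and "vs \<noteq> []"
    and "\<And>h. Suc h < length vs \<Longrightarrow> Omega S $ (vs ! h) $ (vs ! Suc h) \<noteq> 0"
  shows "path_ratio S vs = Omega S $ last vs $ last vs / Omega S $ hd vs $ hd vs"
  using assms(2,3)
proof (induction vs)
  case Nil then show ?case by simp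
next
  case (Cons v vs)
  have diag: "Omega S $ i $ i \<noteq> 0" for i using Omega_diag_pos[OF S, of i] by simp
  show ?case
  proof (cases vs)
    case Nil then show ?thesis using diag by (simp add: path_ratio_def)
  next
    case (Cons u us)
    have "Omega S $ (vs ! h) $ (vs ! Suc h) \<noteq> 0" if "Suc h < length vs" for h
      using Cons.prems(2)[of "Suc h"] that by simp
    with Cons.IH have IH: "path_ratio S vs = Omega S $ last vs $ last vs / Omega S $ u $ u"
      using \<open>vs = u # us\<close> by simp
    have edge: "Omega S $ v $ u \<noteq> 0" using Cons.prems(2)[of 0] \<open>vs = u # us\<close> by simp
    have "path_ratio S (v # vs) = Bmat S $ u $ v / Bmat S $ v $ u * path_ratio S vs"
      unfolding path_ratio_def \<open>vs = u # us\<close>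
      by (simp add: prod.lessThan_Suc_shift del: prod.lessThan_Suc)
    also have "Bmat S $ u $ v / Bmat S $ v $ u = Omega S $ u $ u / Omega S $ v $ v"
      using edge diag[of u] diag[of v] Omega_symmetric[OF S, of u v]
      by (simp add: Bmat_def field_simps)
    finally show ?thesis using IH diag[of u] \<open>vs = u # us\<close> by simp
  qed
qed

lemma Delta_entry:
  fixes S :: "real^'p^'p"
  assumes S: "pos_def_mat S"
  shows "Delta S j $ i $ k =
    (if i = k \<and> same_comp S i j then Omega S $ i $ i / Omega S $ j $ j else 0)"
proof -
  have "path_ratio S vs = Omega S $ i $ i / Omega S $ j $ j" if "gpath S j i vs" for vs
    using path_ratio_eq[OF S] that unfolding gpath_def gedge_def by auto
  then have "path_ratio S (SOME vs. gpath S j i vs) = Omega S $ i $ i / Omega S $ j $ j"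
    if "same_comp S i j"
    using that unfolding same_comp_def by (metis someI_ex)
  then show ?thesis by (auto simp: Delta_def)
qed

definition component :: "real^'p^'p \<Rightarrow> 'p \<Rightarrow> 'p set" where
  "component S j = {i. same_comp S i j}"

lemma card_component_pos: "card (component S j) > 0"
  using same_comp_refl[of S j] by (auto simp: component_def card_gt_0_iff)

definition matrix_block :: "real^'p^'p \<Rightarrow> 'p set \<Rightarrow> bool" where
  "matrix_block A C \<longleftrightarrow> (\<forall>i\<in>C. \<forall>l\<in>-C. A $ i $ l = 0 \<and> A $ l $ i = 0)"

lemma matrix_block_component:
  fixes S :: "real^'p^'p"
  assumes S: "pos_def_mat S"
  shows "matrix_block (Omega S) (component S j)"
proof -
  have "Omega S $ i $ l = 0" if "same_comp S i j" "\<not> same_comp S l j" for i l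
    using that same_comp_gedge[of S i j l] unfolding gedge_def by auto
  then show ?thesis
    unfolding matrix_block_def component_def using Omega_symmetric[OF S] by auto
qed

section \<open>The estimator as a sum of quadratic forms\<close>

definition quad_on :: "real^'p^'p \<Rightarrow> 'p set \<Rightarrow> real^'p \<Rightarrow> real" where
  "quad_on A C x = (\<Sum>i\<in>C. \<Sum>l\<in>C. x $ i * x $ l * A $ i $ l)"

lemma quad_on_measurable [measurable]: "quad_on A C \<in> borel_measurable borel"
  unfolding quad_on_def by measurable

lemma quad_on_UNIV: "quad_on A UNIV x = x \<bullet> (A *v x)"
  by (simp add: quad_on_def inner_vec_def matrix_vector_mult_def sum_distrib_left mult_ac)

lemma quad_on_block_split:
  assumes "matrix_block A C"
  shows "x \<bullet> (A *v x) = quad_on A C x + quad_on A (-C) x"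
proof -
  let ?f = "\<lambda>i l. x $ i * x $ l * A $ i $ l"
  have cross: "(\<Sum>l\<in>UNIV. ?f i l) = (\<Sum>l\<in>D. ?f i l)" if "D = C \<or> D = -C" "i \<in> D" for D i
    using that assms by (intro sum.mono_neutral_right) (auto simp: matrix_block_def)
  have "x \<bullet> (A *v x) = (\<Sum>i\<in>C \<union> -C. \<Sum>l\<in>UNIV. ?f i l)"
    by (simp add: quad_on_UNIV[symmetric] quad_on_def)
  also have "\<dots> = (\<Sum>i\<in>C. \<Sum>l\<in>UNIV. ?f i l) + (\<Sum>i\<in>-C. \<Sum>l\<in>UNIV. ?f i l)"
    by (rule sum.union_disjoint) auto
  also have "\<dots> = quad_on A C x + quad_on A (-C) x"
    unfolding quad_on_def by (intro arg_cong2[where f="(+)"] sum.cong refl cross) auto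
  finally show ?thesis .
qed

lemma quad_on_nonneg:
  assumes "\<And>y. y \<bullet> (A *v y) \<ge> 0"
  shows "quad_on A C x \<ge> 0"
proof -
  define y where "y = (\<chi> i. if i \<in> C then x $ i else 0)"
  have inner: "(\<Sum>l\<in>UNIV. y $ i * y $ l * A $ i $ l) = (\<Sum>l\<in>C. y $ i * y $ l * A $ i $ l)" for i
    by (rule sum.mono_neutral_right) (auto simp: y_def)
  have "quad_on A UNIV y = (\<Sum>i\<in>C. \<Sum>l\<in>UNIV. y $ i * y $ l * A $ i $ l)"
    unfolding quad_on_def by (rule sum.mono_neutral_right) (auto simp: y_def)
  also have "\<dots> = quad_on A C x"
    unfolding quad_on_def inner by (intro sum.cong refl) (simp add: y_def)
  finally show ?thesis using assms[of y] by (simp add: quad_on_UNIV)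
qed

lemma Delta_mult_entry:
  fixes S M :: "real^'p^'p"
  assumes S: "pos_def_mat S"
  shows "(Delta S j ** M) $ i $ l = Delta S j $ i $ i * M $ i $ l"
proof -
  have "(\<Sum>k\<in>UNIV. Delta S j $ i $ k * M $ k $ l) = Delta S j $ i $ i * M $ i $ l"
    by (subst sum.remove[of UNIV i]) (auto simp: Delta_entry[OF S])
  then show ?thesis by (simp add: matrix_matrix_mult_def)
qed

lemma trace_Delta_mult_Bmat:
  fixes S M :: "real^'p^'p" and j :: 'p
  assumes S: "pos_def_mat S"
  shows "trace (Delta S j ** M ** Bmat S)
    = (\<Sum>i\<in>component S j. \<Sum>l\<in>component S j. M $ i $ l * Omega S $ i $ l) / Omega S $ j $ j"
proof -
  let ?C = "component S j" and ?O = "Omega S"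
  have "(Delta S j ** M ** Bmat S) $ i $ i
      = (if i \<in> ?C then (\<Sum>l\<in>?C. M $ i $ l * ?O $ i $ l) / ?O $ j $ j else 0)" for i
  proof (cases "i \<in> ?C")
    case True
    have "Delta S j $ i $ i * M $ i $ l * Bmat S $ l $ i = M $ i $ l * ?O $ i $ l / ?O $ j $ j" for l
      using True Omega_diag_pos[OF S, of i] Omega_symmetric[OF S, of l i]
      by (simp add: Delta_entry[OF S] component_def Bmat_def)
    then have "(Delta S j ** M ** Bmat S) $ i $ i = (\<Sum>l\<in>UNIV. M $ i $ l * ?O $ i $ l) / ?O $ j $ j"
      by (simp add: matrix_matrix_mult_def[of "Delta S j ** M"] Delta_mult_entry[OF S] sum_divide_distrib)
    also have "\<dots> = (\<Sum>l\<in>?C. M $ i $ l * ?O $ i $ l) / ?O $ j $ j"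
      using True matrix_block_component[OF S, of j]
      by (auto intro!: sum.mono_neutral_right simp: matrix_block_def)
    finally show ?thesis using True by simp
  next
    case False
    then show ?thesis
      by (simp add: matrix_matrix_mult_def[of "Delta S j ** M"] Delta_mult_entry[OF S]
          Delta_entry[OF S] component_def)
  qed
  then show ?thesis by (simp add: trace_def sum.If_cases sum_divide_distrib)
qed

lemma phi_SML_eq_quad_on:
  fixes S :: "real^'p^'p" and j :: 'p
  assumes S: "pos_def_mat S"
  defines "C \<equiv> component S j"
  shows "phi_SML S n X j
    = phi S j / (real (card C) * real n) * (\<Sum>m<n. quad_on (Omega S) C (X m))"
proof -
  have "(\<Sum>i\<in>C. \<Sum>l\<in>C. sample_cov n X $ i $ l * Omega S $ i $ l)
      = (\<Sum>i\<in>C. \<Sum>l\<in>C. \<Sum>m<n. X m $ i * X m $ l * Omega S $ i $ l) / real n"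
    by (simp add: sample_cov_def sum_divide_distrib sum_distrib_right)
  also have "\<dots> = (\<Sum>m<n. quad_on (Omega S) C (X m)) / real n"
    unfolding quad_on_def sum.swap[where B="{..<n}"] ..
  finally show ?thesis
    unfolding phi_SML_def trace_Delta_mult_Bmat[OF S] phi_def comp_size_def
    by (simp add: C_def component_def)
qed

definition scale_on :: "'p set \<Rightarrow> real \<Rightarrow> real^'p \<Rightarrow> real^'p" where
  "scale_on C c x = (\<chi> i. (if i \<in> C then c else 1) * x $ i)"

lemma scale_on_measurable [measurable]: "scale_on C c \<in> borel_measurable borel"
  unfolding scale_on_def by (intro borel_measurable_continuous_onI continuous_intros)

lemma quad_on_scale_on: "quad_on A C (scale_on C c x) = c\<^sup>2 * quad_on A C x"
  by (simp add: quad_on_def scale_on_def sum_distrib_left power2_eq_square mult_ac)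

lemma quad_on_Compl_scale_on: "quad_on A (-C) (scale_on C c x) = quad_on A (-C) x"
  by (simp add: quad_on_def scale_on_def)

lemma bij_betw_axis_Basis: "bij_betw (\<lambda>i. axis i (1::real)) UNIV (Basis :: (real^'p) set)"
  by (auto simp: bij_betw_def inj_def axis_eq_axis Basis_vec_def)

lemma nn_integral_lborel_scale_on:
  fixes f :: "real^'p \<Rightarrow> ennreal"
  assumes c: "c > 0" and [measurable]: "f \<in> borel_measurable borel"
  shows "(\<integral>\<^sup>+x. f x \<partial>lborel) = ennreal (c ^ card C) * (\<integral>\<^sup>+x. f (scale_on C c x) \<partial>lborel)"
proof -
  define cf where "cf b = (if b \<in> (\<lambda>i. axis i 1) ` C then c else 1)" for b :: "real^'p"
  have cf_axis: "cf (axis i 1) = (if i \<in> C then c else 1)" for i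
    by (auto simp: cf_def axis_eq_axis)
  have "(\<Sum>i\<in>UNIV. (cf (axis i 1) * (x \<bullet> axis i 1)) *\<^sub>R axis i 1) $ k = scale_on C c x $ k"
    for x k
  proof -
    have "(\<Sum>i\<in>UNIV. (cf (axis i 1) * (x \<bullet> axis i 1)) *\<^sub>R axis i 1) $ k
        = (\<Sum>i\<in>UNIV. if i = k then cf (axis i 1) * x $ i else 0)"
      unfolding sum_component inner_axis by (intro sum.cong refl) (simp add: axis_def)
    then show ?thesis by (simp add: cf_axis scale_on_def)
  qed
  then have "0 + (\<Sum>b\<in>Basis. (cf b * (x \<bullet> b)) *\<^sub>R b) = scale_on C c x" for x
    unfolding sum.reindex_bij_betw[OF bij_betw_axis_Basis, symmetric] by (simp add: vec_eq_iff)
  then have "lborel = density (distr lborel borel (scale_on C c)) (\<lambda>_. \<Prod>b\<in>Basis. \<bar>cf b\<bar>)"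
    using lborel_affine_euclidean[of cf 0] c by (simp add: cf_def)
  moreover have "(\<Prod>b\<in>Basis. \<bar>cf b\<bar>) = c ^ card C"
    unfolding prod.reindex_bij_betw[OF bij_betw_axis_Basis, symmetric] cf_axis
    using c by (simp add: prod.If_cases)
  ultimately have "(\<integral>\<^sup>+x. f x \<partial>lborel)
      = (\<integral>\<^sup>+x. f x \<partial>density (distr lborel borel (scale_on C c)) (\<lambda>_. c ^ card C))"
    by simp
  also have "\<dots> = (\<integral>\<^sup>+x. ennreal (c ^ card C) * f (scale_on C c x) \<partial>lborel)"
    by (simp add: nn_integral_density nn_integral_distr)
  also have "\<dots> = ennreal (c ^ card C) * (\<integral>\<^sup>+x. f (scale_on C c x) \<partial>lborel)"
    by (rule nn_integral_cmult) measurable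
  finally show ?thesis .
qed

section \<open>Moments from homogeneity\<close>

lemma nn_integral_FTC_dilation:
  fixes \<phi> \<psi> :: "real \<Rightarrow> real"
  assumes [measurable]: "\<psi> \<in> borel_measurable borel"
    and u: "u \<ge> 0" and t: "t \<ge> 1"
    and deriv: "\<And>u s. u \<ge> 0 \<Longrightarrow> s > 0 \<Longrightarrow> ((\<lambda>s. - \<phi> (s * u)) has_real_derivative \<psi> (s * u) / s) (at s)"
    and \<psi>_nonneg: "\<And>u. u \<ge> 0 \<Longrightarrow> \<psi> u \<ge> 0"
  shows "(\<integral>\<^sup>+s. ennreal (\<psi> (s * u) / s) * indicator {1..t} s \<partial>lborel) = ennreal (\<phi> u - \<phi> (t * u))"
    and "\<phi> (t * u) \<le> \<phi> u"
proof -
  have d: "((\<lambda>s. - \<phi> (s * u)) has_real_derivative \<psi> (s * u) / s) (at s)" if "s \<in> {1..t}" for s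
    using deriv u that by auto
  have nonneg: "0 \<le> \<psi> (s * u) / s" if "s \<in> {1..t}" for s
    using \<psi>_nonneg u that by auto
  show "(\<integral>\<^sup>+s. ennreal (\<psi> (s * u) / s) * indicator {1..t} s \<partial>lborel) = ennreal (\<phi> u - \<phi> (t * u))"
    using nn_integral_FTC_Icc[OF _ d nonneg t] by simp
  have "0 \<le> (\<integral>s. \<psi> (s * u) / s * indicator {1..t} s \<partial>lborel)"
    using nonneg by (intro Bochner_Integration.integral_nonneg) (auto simp: indicator_def)
  also have "\<dots> = \<phi> u - \<phi> (t * u)"
    using integral_FTC_Icc_nonneg[OF _ d nonneg t] by simp
  finally show "\<phi> (t * u) \<le> \<phi> u" by simp
qed

locale homogeneous_weight =
  fixes q :: "'a::euclidean_space \<Rightarrow> real" and W :: "'a \<Rightarrow> ennreal" and a :: real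
  assumes q_measurable [measurable]: "q \<in> borel_measurable borel"
    and W_measurable [measurable]: "W \<in> borel_measurable borel"
    and q_nonneg: "q x \<ge> 0"
    and a_pos: "a > 0"
    and homogeneous: "r > 0 \<Longrightarrow> h \<in> borel_measurable borel \<Longrightarrow>
      (\<integral>\<^sup>+x. ennreal (h (q x)) * W x \<partial>lborel) = ennreal (r powr a) * (\<integral>\<^sup>+x. ennreal (h (r * q x)) * W x \<partial>lborel)"
begin

definition moment :: "(real \<Rightarrow> real) \<Rightarrow> ennreal" where
  "moment h = (\<integral>\<^sup>+x. ennreal (h (q x)) * W x \<partial>lborel)"

lemma moment_dilate:
  assumes "r > 0" and "h \<in> borel_measurable borel"
  shows "moment h = ennreal (r powr a) * moment (\<lambda>u. h (r * u))"
  using homogeneous[OF assms] unfolding moment_def .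

lemma moment_linear:
  assumes "\<alpha> \<ge> 0" "\<beta> \<ge> 0" and "\<And>u. u \<ge> 0 \<Longrightarrow> f u \<ge> 0" "\<And>u. u \<ge> 0 \<Longrightarrow> g u \<ge> 0"
    and [measurable]: "f \<in> borel_measurable borel" "g \<in> borel_measurable borel"
  shows "moment (\<lambda>u. \<alpha> * f u + \<beta> * g u) = ennreal \<alpha> * moment f + ennreal \<beta> * moment g"
proof -
  have "moment (\<lambda>u. \<alpha> * f u + \<beta> * g u)
      = (\<integral>\<^sup>+x. ennreal \<alpha> * (ennreal (f (q x)) * W x) + ennreal \<beta> * (ennreal (g (q x)) * W x) \<partial>lborel)"
    unfolding moment_def using assms q_nonneg
    by (intro nn_integral_cong) (simp add: ennreal_mult distrib_right mult.assoc)
  also have "\<dots> = ennreal \<alpha> * moment f + ennreal \<beta> * moment g"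
    unfolding moment_def by (simp add: nn_integral_add nn_integral_cmult)
  finally show ?thesis .
qed

text \<open>Write \<open>\<phi> u - \<phi> (2 u)\<close> as the integral of \<open>\<psi> (s u) / s\<close> over \<open>s \<in> [1, 2]\<close> and exchange
  the integrals; homogeneity turns the inner integral into \<open>s\<^sup>-\<^sup>a\<^sup>-\<^sup>1 \<cdot> moment \<psi>\<close>.\<close>

lemma moment_dilation_identity:
  assumes [measurable]: "\<phi> \<in> borel_measurable borel" "\<psi> \<in> borel_measurable borel"
    and deriv: "\<And>u s. u \<ge> 0 \<Longrightarrow> s > 0 \<Longrightarrow> ((\<lambda>s. - \<phi> (s * u)) has_real_derivative \<psi> (s * u) / s) (at s)"
    and \<psi>_nonneg: "\<And>u. u \<ge> 0 \<Longrightarrow> \<psi> u \<ge> 0" and \<phi>_nonneg: "\<And>u. u \<ge> 0 \<Longrightarrow> \<phi> u \<ge> 0"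
  shows "moment \<phi> = moment (\<lambda>u. \<phi> (2 * u)) + ennreal ((1 - 2 powr (-a)) / a) * moment \<psi>"
proof -
  define g where "g s x = ennreal (\<psi> (s * q x) / s) * indicator {1..2::real} s" for s x
  have [measurable]: "case_prod g \<in> borel_measurable (lborel \<Otimes>\<^sub>M lborel)"
    unfolding g_def by measurable
  have split: "ennreal (\<phi> (q x)) = ennreal (\<phi> (2 * q x)) + (\<integral>\<^sup>+s. g s x \<partial>lborel)" for x
    using nn_integral_FTC_dilation[of \<psi> "q x" 2 \<phi>] deriv \<psi>_nonneg q_nonneg[of x] \<phi>_nonneg[of "2 * q x"]
    by (simp add: g_def ennreal_plus[symmetric])
  have inner: "(\<integral>\<^sup>+x. g s x * W x \<partial>lborel) = ennreal (s powr (-a-1)) * indicator {1..2} s * moment \<psi>"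
    for s
  proof (cases "s \<in> {1..2}")
    case True
    then have s: "s > 0" by auto
    have "(\<integral>\<^sup>+x. g s x * W x \<partial>lborel) = (\<integral>\<^sup>+x. ennreal (1/s) * (ennreal (\<psi> (s * q x)) * W x) \<partial>lborel)"
      using True s by (intro nn_integral_cong) (simp add: g_def ennreal_mult'[symmetric] mult_ac)
    also have "\<dots> = ennreal (1/s) * moment (\<lambda>u. \<psi> (s * u))"
      unfolding moment_def by (rule nn_integral_cmult) measurable
    also have "\<dots> = ennreal (1/s) * ennreal (s powr (-a)) * moment \<psi>"
      using moment_dilate[OF s, of \<psi>] s
      by (simp add: mult.assoc[symmetric] ennreal_mult'[symmetric] powr_minus field_simps)
    finally show ?thesis
      using True s by (simp add: ennreal_mult'[symmetric] powr_diff powr_minus field_simps)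
  qed (simp add: g_def)
  have "moment \<phi> = moment (\<lambda>u. \<phi> (2 * u)) + (\<integral>\<^sup>+x. (\<integral>\<^sup>+s. g s x \<partial>lborel) * W x \<partial>lborel)"
    unfolding moment_def split distrib_right by (rule nn_integral_add) measurable
  also have "(\<integral>\<^sup>+x. (\<integral>\<^sup>+s. g s x \<partial>lborel) * W x \<partial>lborel) = (\<integral>\<^sup>+x. (\<integral>\<^sup>+s. g s x * W x \<partial>lborel) \<partial>lborel)"
    by (intro nn_integral_cong nn_integral_multc[symmetric]) measurable
  also have "\<dots> = (\<integral>\<^sup>+s. (\<integral>\<^sup>+x. g s x * W x \<partial>lborel) \<partial>lborel)"
    by (rule lborel_pair.Fubini') measurable
  also have "\<dots> = (\<integral>\<^sup>+s. ennreal (s powr (-a-1)) * indicator {1..2} s \<partial>lborel) * moment \<psi>"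
    unfolding inner by (rule nn_integral_multc) measurable
  also have "(\<integral>\<^sup>+s. ennreal (s powr (-a-1)) * indicator {1..2} s \<partial>lborel) = ennreal ((1 - 2 powr (-a)) / a)"
  proof -
    have "((\<lambda>s. - (s powr (-a)) / a) has_real_derivative s powr (-a-1)) (at s)" if "s \<in> {1..2}" for s
      using a_pos that by (auto intro!: derivative_eq_intros simp: field_simps powr_diff)
    then show ?thesis
      by (subst nn_integral_FTC_Icc) (auto simp: diff_divide_distrib)
  qed
  finally show ?thesis .
qed

lemma moment_recursion:
  assumes [measurable]: "\<phi> \<in> borel_measurable borel" "\<psi> \<in> borel_measurable borel"
    and deriv: "\<And>u s. u \<ge> 0 \<Longrightarrow> s > 0 \<Longrightarrow> ((\<lambda>s. - \<phi> (s * u)) has_real_derivative \<psi> (s * u) / s) (at s)"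
    and \<psi>_nonneg: "\<And>u. u \<ge> 0 \<Longrightarrow> \<psi> u \<ge> 0" and \<phi>_nonneg: "\<And>u. u \<ge> 0 \<Longrightarrow> \<phi> u \<ge> 0"
    and finite: "moment \<phi> < \<infinity>"
  shows "moment \<psi> = ennreal a * moment \<phi>"
proof -
  define \<kappa> where "\<kappa> = (1 - 2 powr (-a)) / a"
  have \<kappa>: "\<kappa> > 0" unfolding \<kappa>_def using a_pos by (simp add: powr_minus field_simps)
  obtain \<gamma> where \<gamma>: "\<gamma> \<ge> 0" "moment \<phi> = ennreal \<gamma>"
    using finite by (cases "moment \<phi>") auto
  have "ennreal \<gamma> = ennreal (2 powr a) * moment (\<lambda>u. \<phi> (2 * u))"
    using moment_dilate[of 2 \<phi>] \<gamma>(2) by simp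
  then have "ennreal (2 powr (-a)) * ennreal \<gamma> = ennreal (2 powr (-a) * 2 powr a) * moment (\<lambda>u. \<phi> (2 * u))"
    by (simp add: ennreal_mult' mult.assoc)
  then have "moment (\<lambda>u. \<phi> (2 * u)) = ennreal (2 powr (-a) * \<gamma>)"
    using \<gamma>(1) by (simp add: ennreal_mult' powr_add[symmetric])
  then have sum: "ennreal \<gamma> = ennreal (2 powr (-a) * \<gamma>) + ennreal \<kappa> * moment \<psi>"
    using moment_dilation_identity[OF assms(1-5)] unfolding \<gamma>(2) \<kappa>_def by simp
  have "ennreal \<kappa> * moment \<psi> = (ennreal (2 powr (-a) * \<gamma>) + ennreal \<kappa> * moment \<psi>) - ennreal (2 powr (-a) * \<gamma>)"
    by (rule ennreal_add_diff_cancel_left[symmetric]) simp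
  also have "\<dots> = ennreal (\<gamma> - 2 powr (-a) * \<gamma>)"
    unfolding sum[symmetric] using \<gamma>(1) by (intro ennreal_minus) simp
  also have "\<gamma> - 2 powr (-a) * \<gamma> = a * \<gamma> * \<kappa>"
    using a_pos by (simp add: \<kappa>_def field_simps)
  finally have "moment \<psi> * ennreal \<kappa> = ennreal (a * \<gamma>) * ennreal \<kappa>"
    using a_pos \<gamma>(1) \<kappa> by (simp add: ennreal_mult mult.commute)
  then have "moment \<psi> = ennreal (a * \<gamma>)"
    using \<kappa> by (metis ennreal_eq_0_iff ennreal_mult_divide_eq ennreal_neq_top not_le)
  then show ?thesis using a_pos \<gamma> by (simp add: ennreal_mult')
qed

text \<open>For \<open>W\<close> the Gaussian weight, \<open>q\<close> is \<open>\<chi>\<^sup>2\<close> with \<open>2a\<close> degrees of freedom; the recursion is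
  applied to \<open>\<phi> u = 2 e\<^bsup>-u/2\<^esup>\<close> and \<open>\<phi> u = (2u + 4) e\<^bsup>-u/2\<^esup>\<close>.\<close>

lemma gaussian_moments:
  assumes normalized: "moment (\<lambda>u. exp (- u / 2)) = 1"
  shows "moment (\<lambda>u. exp (- u / 2) * u) = ennreal (2 * a)"
    and "moment (\<lambda>u. exp (- u / 2) * u\<^sup>2) = ennreal (4 * a * (a + 1))"
proof -
  have "moment (\<lambda>u. 2 * exp (- u / 2)) = 2"
    using moment_linear[of 2 0 "\<lambda>u. exp (- u / 2)" "\<lambda>u. exp (- u / 2)"] normalized by simp
  moreover have "((\<lambda>s. - (2 * exp (- (s * u) / 2))) has_real_derivative
      exp (- (s * u) / 2) * (s * u) / s) (at s)" if "s > 0" for u s :: real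
  proof -
    have "((\<lambda>s. - (2 * exp (- (s * u) / 2))) has_real_derivative exp (- (s * u) / 2) * u) (at s)"
      by (auto intro!: derivative_eq_intros)
    then show ?thesis by (rule DERIV_cong) (use that in simp)
  qed
  ultimately have "moment (\<lambda>u. exp (- u / 2) * u) = ennreal a * 2"
    using moment_recursion[of "\<lambda>u. 2 * exp (- u / 2)" "\<lambda>u. exp (- u / 2) * u"] by simp
  then show first: "moment (\<lambda>u. exp (- u / 2) * u) = ennreal (2 * a)"
    using a_pos by (simp add: ennreal_mult' mult.commute)
  have "moment (\<lambda>u. 2 * (exp (- u / 2) * u) + 4 * exp (- u / 2)) = ennreal (4 * a + 4)"
    using moment_linear[of 2 4 "\<lambda>u. exp (- u / 2) * u" "\<lambda>u. exp (- u / 2)"] normalized first a_pos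
    by (simp add: ennreal_mult' mult.assoc[symmetric])
  moreover have "((\<lambda>s. - (2 * (exp (- (s * u) / 2) * (s * u)) + 4 * exp (- (s * u) / 2))) has_real_derivative
      exp (- (s * u) / 2) * (s * u)\<^sup>2 / s) (at s)" if "s > 0" for u s :: real
  proof -
    have "((\<lambda>s. - (2 * (exp (- (s * u) / 2) * (s * u)) + 4 * exp (- (s * u) / 2))) has_real_derivative
        exp (- (s * u) / 2) * s * u\<^sup>2) (at s)"
      by (auto intro!: derivative_eq_intros simp: algebra_simps power2_eq_square)
    then show ?thesis by (rule DERIV_cong) (use that in \<open>simp add: power2_eq_square\<close>)
  qed
  ultimately have "moment (\<lambda>u. exp (- u / 2) * u\<^sup>2) = ennreal a * ennreal (4 * a + 4)"
    using moment_recursion[of "\<lambda>u. 2 * (exp (- u / 2) * u) + 4 * exp (- u / 2)" "\<lambda>u. exp (- u / 2) * u\<^sup>2"]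
    by simp
  also have "\<dots> = ennreal (a * (4 * a + 4))"
    using a_pos by (simp add: ennreal_mult')
  also have "a * (4 * a + 4) = 4 * a * (a + 1)"
    by (simp add: algebra_simps)
  finally show "moment (\<lambda>u. exp (- u / 2) * u\<^sup>2) = ennreal (4 * a * (a + 1))" .
qed

end

section \<open>Gaussian quadratic forms on a block\<close>

lemma mvn_density_block_factor:
  fixes S :: "real^'p^'p"
  assumes "matrix_block (Omega S) C"
  shows "mvn_density S x = exp (- quad_on (Omega S) C x / 2)
    * (exp (- quad_on (Omega S) (-C) x / 2) / sqrt ((2 * pi) ^ CARD('p) * det S))"
  unfolding mvn_density_def Omega_def[symmetric] quad_on_block_split[OF assms]
  by (simp add: exp_add[symmetric] field_simps)

definition block_weight :: "real^'p^'p \<Rightarrow> 'p set \<Rightarrow> real^'p \<Rightarrow> ennreal" where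
  "block_weight S C x =
     ennreal (exp (- quad_on (Omega S) (-C) x / 2) / sqrt ((2 * pi) ^ CARD('p) * det S))"

lemma homogeneous_weight_block:
  fixes S :: "real^'p^'p"
  assumes S: "pos_def_mat S" and "C \<noteq> {}"
  shows "homogeneous_weight (quad_on (Omega S) C) (block_weight S C) (card C / 2)"
proof
  show "block_weight S C \<in> borel_measurable borel"
    unfolding block_weight_def by measurable
  show "quad_on (Omega S) C x \<ge> 0" for x
    by (rule quad_on_nonneg[OF Omega_quadratic_nonneg[OF S]])
  show "real (card C) / 2 > 0" using \<open>C \<noteq> {}\<close> by (simp add: card_gt_0_iff)
  fix r :: real and h :: "real \<Rightarrow> real"
  assume r: "r > 0" and [measurable]: "h \<in> borel_measurable borel"
  have "sqrt r ^ card C = r powr (card C / 2)"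
    using r by (simp add: powr_half_sqrt[symmetric] powr_realpow[symmetric] powr_powr)
  moreover have "quad_on (Omega S) C (scale_on C (sqrt r) x) = r * quad_on (Omega S) C x"
    and "block_weight S C (scale_on C (sqrt r) x) = block_weight S C x" for x
    using r by (simp_all add: block_weight_def quad_on_scale_on quad_on_Compl_scale_on)
  ultimately show "(\<integral>\<^sup>+x. ennreal (h (quad_on (Omega S) C x)) * block_weight S C x \<partial>lborel)
      = ennreal (r powr (card C / 2))
        * (\<integral>\<^sup>+x. ennreal (h (r * quad_on (Omega S) C x)) * block_weight S C x \<partial>lborel)"
    using r nn_integral_lborel_scale_on[of "sqrt r" "\<lambda>x. ennreal (h (quad_on (Omega S) C x)) * block_weight S C x" C]
    by (simp add: block_weight_def)
qed simp

lemma mvn_nn_integral_block: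
  fixes S :: "real^'p^'p" and Y :: "'w \<Rightarrow> real^'p"
  assumes block: "matrix_block (Omega S) C"
    and Y: "distributed M lborel Y (\<lambda>x. ennreal (mvn_density S x))"
    and [measurable]: "h \<in> borel_measurable borel"
  shows "(\<integral>\<^sup>+\<omega>. ennreal (h (quad_on (Omega S) C (Y \<omega>))) \<partial>M)
    = (\<integral>\<^sup>+x. ennreal (exp (- quad_on (Omega S) C x / 2) * h (quad_on (Omega S) C x)) * block_weight S C x \<partial>lborel)"
proof -
  let ?q = "quad_on (Omega S) C"
  have "(\<integral>\<^sup>+\<omega>. ennreal (h (?q (Y \<omega>))) \<partial>M) = (\<integral>\<^sup>+x. ennreal (mvn_density S x) * ennreal (h (?q x)) \<partial>lborel)"
    by (rule distributed_nn_integral[OF Y, symmetric]) measurable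
  also have "\<dots> = (\<integral>\<^sup>+x. ennreal (exp (- ?q x / 2) * h (?q x)) * block_weight S C x \<partial>lborel)"
  proof (intro nn_integral_cong)
    fix x
    have "ennreal (mvn_density S x) = ennreal (exp (- ?q x / 2)) * block_weight S C x"
      unfolding mvn_density_block_factor[OF block] block_weight_def by (rule ennreal_mult') simp
    moreover have "ennreal (exp (- ?q x / 2) * h (?q x)) = ennreal (exp (- ?q x / 2)) * ennreal (h (?q x))"
      by (rule ennreal_mult') simp
    ultimately show "ennreal (mvn_density S x) * ennreal (h (?q x))
        = ennreal (exp (- ?q x / 2) * h (?q x)) * block_weight S C x"
      by (simp only: mult_ac)
  qed
  finally show ?thesis .
qed

lemma mvn_block_form_moments:
  fixes S :: "real^'p^'p" and Y :: "'w \<Rightarrow> real^'p"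
  assumes S: "pos_def_mat S" and block: "matrix_block (Omega S) C" and "C \<noteq> {}"
    and "prob_space M" and Y: "distributed M lborel Y (\<lambda>x. ennreal (mvn_density S x))"
  shows "has_bochner_integral M (\<lambda>\<omega>. quad_on (Omega S) C (Y \<omega>)) (card C)"
    and "has_bochner_integral M (\<lambda>\<omega>. (quad_on (Omega S) C (Y \<omega>))\<^sup>2) (card C * (card C + 2))"
proof -
  interpret G: homogeneous_weight "quad_on (Omega S) C" "block_weight S C" "card C / 2"
    by (rule homogeneous_weight_block[OF S \<open>C \<noteq> {}\<close>])
  have [measurable]: "Y \<in> borel_measurable M" using distributed_measurable[OF Y] by simp
  note expectation = mvn_nn_integral_block[OF block Y]
  have "G.moment (\<lambda>u. exp (- u / 2)) = 1"
    using expectation[of "\<lambda>_. 1"] prob_space.emeasure_space_1[OF \<open>prob_space M\<close>]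
    by (simp add: G.moment_def)
  note moments = G.gaussian_moments[OF this, unfolded G.moment_def]
  have "4 * (card C / 2) * (card C / 2 + 1) = real (card C * (card C + 2))"
    by (simp add: field_simps)
  then have "(\<integral>\<^sup>+\<omega>. ennreal (quad_on (Omega S) C (Y \<omega>)) \<partial>M) = ennreal (card C)"
    and "(\<integral>\<^sup>+\<omega>. ennreal ((quad_on (Omega S) C (Y \<omega>))\<^sup>2) \<partial>M) = ennreal (card C * (card C + 2))"
    using expectation[of "\<lambda>u. u"] expectation[of "\<lambda>u. u\<^sup>2"] moments by simp_all
  then show "has_bochner_integral M (\<lambda>\<omega>. quad_on (Omega S) C (Y \<omega>)) (card C)"
    and "has_bochner_integral M (\<lambda>\<omega>. (quad_on (Omega S) C (Y \<omega>))\<^sup>2) (card C * (card C + 2))"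
    using G.q_nonneg by (auto intro!: has_bochner_integral_nn_integral)
qed

lemma (in prob_space) indep_vars_expectation_square_sum:
  fixes Z :: "'i \<Rightarrow> 'a \<Rightarrow> real"
  assumes indep: "indep_vars (\<lambda>_. borel) Z I" and "finite I"
    and integrable: "\<And>i. i \<in> I \<Longrightarrow> integrable M (Z i)"
    and square_integrable: "\<And>i. i \<in> I \<Longrightarrow> integrable M (\<lambda>x. (Z i x)\<^sup>2)"
    and centered: "\<And>i. i \<in> I \<Longrightarrow> expectation (Z i) = 0"
  shows "expectation (\<lambda>x. (\<Sum>i\<in>I. Z i x)\<^sup>2) = (\<Sum>i\<in>I. expectation (\<lambda>x. (Z i x)\<^sup>2))"
proof -
  have cross: "integrable M (\<lambda>x. Z i x * Z k x)
      \<and> expectation (\<lambda>x. Z i x * Z k x) = (if i = k then expectation (\<lambda>x. (Z i x)\<^sup>2) else 0)"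
    if "i \<in> I" "k \<in> I" for i k
  proof (cases "i = k")
    case True
    then show ?thesis using square_integrable[OF that(1)] by (simp add: power2_eq_square)
  next
    case False
    have "indep_vars (\<lambda>_. borel) Z {i, k}"
      by (rule indep_vars_subset[OF indep]) (use that in auto)
    then have "integrable M (\<lambda>x. \<Prod>l\<in>{i, k}. Z l x)"
      and "expectation (\<lambda>x. \<Prod>l\<in>{i, k}. Z l x) = (\<Prod>l\<in>{i, k}. expectation (Z l))"
      using integrable that by (auto intro!: indep_vars_integrable indep_vars_lebesgue_integral)
    then show ?thesis using False centered that by simp
  qed
  have "expectation (\<lambda>x. (\<Sum>i\<in>I. Z i x)\<^sup>2) = expectation (\<lambda>x. \<Sum>i\<in>I. \<Sum>k\<in>I. Z i x * Z k x)"
    by (simp add: power2_eq_square sum_product)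
  also have "\<dots> = (\<Sum>i\<in>I. \<Sum>k\<in>I. expectation (\<lambda>x. Z i x * Z k x))"
    using cross by (simp add: Bochner_Integration.integral_sum integrable_sum)
  also have "\<dots> = (\<Sum>i\<in>I. \<Sum>k\<in>I. if i = k then expectation (\<lambda>x. (Z i x)\<^sup>2) else 0)"
    by (intro sum.cong refl) (simp add: cross)
  also have "\<dots> = (\<Sum>i\<in>I. expectation (\<lambda>x. (Z i x)\<^sup>2))"
    using \<open>finite I\<close> by simp
  finally show ?thesis .
qed

lemma (in prob_space) indep_vars_expectation_square_deviation_sum:
  fixes Q :: "'i \<Rightarrow> 'a \<Rightarrow> real" and \<mu> \<sigma> :: real
  assumes indep: "indep_vars (\<lambda>_. borel) Q I" and "finite I"
    and mean: "\<And>i. i \<in> I \<Longrightarrow> has_bochner_integral M (Q i) \<mu>"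
    and second_moment: "\<And>i. i \<in> I \<Longrightarrow> has_bochner_integral M (\<lambda>x. (Q i x)\<^sup>2) \<sigma>"
  shows "expectation (\<lambda>x. (\<Sum>i\<in>I. Q i x - \<mu>)\<^sup>2) = real (card I) * (\<sigma> - \<mu>\<^sup>2)"
proof -
  define Z where "Z i x = Q i x - \<mu>" for i x
  have const: "has_bochner_integral M (\<lambda>_. d) d" for d :: real
    by (simp add: has_bochner_integral_iff prob_space)
  have "has_bochner_integral M (Z i) 0" "has_bochner_integral M (\<lambda>x. (Z i x)\<^sup>2) (\<sigma> - \<mu>\<^sup>2)"
    if "i \<in> I" for i
  proof -
    show "has_bochner_integral M (Z i) 0"
      using has_bochner_integral_diff[OF mean[OF that] const[of \<mu>]] unfolding Z_def[abs_def] by simp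
    have "(\<lambda>x. (Z i x)\<^sup>2) = (\<lambda>x. (Q i x)\<^sup>2 - 2 * \<mu> * Q i x + \<mu>\<^sup>2)"
      by (simp add: Z_def power2_eq_square algebra_simps)
    moreover have "has_bochner_integral M (\<lambda>x. (Q i x)\<^sup>2 - 2 * \<mu> * Q i x + \<mu>\<^sup>2) (\<sigma> - 2 * \<mu> * \<mu> + \<mu>\<^sup>2)"
      by (intro has_bochner_integral_add has_bochner_integral_diff has_bochner_integral_mult_right
          mean second_moment const that)
    ultimately show "has_bochner_integral M (\<lambda>x. (Z i x)\<^sup>2) (\<sigma> - \<mu>\<^sup>2)"
      by (simp add: power2_eq_square)
  qed
  moreover have "indep_vars (\<lambda>_. borel) Z I"
    unfolding Z_def[abs_def] by (rule indep_vars_compose2[OF indep]) measurable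
  ultimately have "expectation (\<lambda>x. (\<Sum>i\<in>I. Z i x)\<^sup>2) = (\<Sum>i\<in>I. \<sigma> - \<mu>\<^sup>2)"
    using indep_vars_expectation_square_sum[of Z I] \<open>finite I\<close> by (simp add: has_bochner_integral_iff)
  then show ?thesis by (simp add: Z_def)
qed

theorem mainTheorem6:
  fixes M :: "'w measure" and X :: "nat \<Rightarrow> 'w \<Rightarrow> real^'p"
    and Sigma :: "real^'p^'p" and n :: nat and j :: 'p
  assumes "n \<ge> 1" and "CARD('p) \<ge> 2"
    and "prob_space M"
    and "pos_def_mat Sigma"
    and "prob_space.indep_vars M (\<lambda>_. borel) X {..<n}"
    and "\<And>k. k < n \<Longrightarrow> distributed M lborel (X k) (\<lambda>x. ennreal (mvn_density Sigma x))"
  shows "(\<integral>\<omega>. (phi_SML Sigma n (\<lambda>k. X k \<omega>) j - phi Sigma j)^2 \<partial>M)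
           = 2 * (phi Sigma j)^2 / (real n * real (comp_size Sigma j))"
proof -
  interpret prob_space M by (rule assms(3))
  define C where "C = component Sigma j"
  define c where "c = real (card C)"
  define Q where "Q m \<omega> = quad_on (Omega Sigma) C (X m \<omega>)" for m \<omega>
  have c: "c > 0" and "C \<noteq> {}" using card_component_pos[of Sigma j] by (auto simp: c_def C_def)
  then have "has_bochner_integral M (Q m) c" "has_bochner_integral M (\<lambda>\<omega>. (Q m \<omega>)\<^sup>2) (c * (c + 2))"
    if "m < n" for m
    using mvn_block_form_moments[OF assms(4) matrix_block_component[OF assms(4), of j] _ assms(3)
        assms(6)[OF that]]
    by (simp_all add: Q_def[abs_def] C_def c_def algebra_simps)
  then have variance: "expectation (\<lambda>\<omega>. (\<Sum>m<n. Q m \<omega> - c)\<^sup>2) = real n * (2 * c)"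
    using indep_vars_expectation_square_deviation_sum[of Q "{..<n}" c "c * (c + 2)"]
      indep_vars_compose2[OF assms(5), of "\<lambda>_. quad_on (Omega Sigma) C"]
    by (simp add: Q_def[abs_def] power2_eq_square algebra_simps)
  have error: "phi_SML Sigma n (\<lambda>k. X k \<omega>) j - phi Sigma j = phi Sigma j / (c * n) * (\<Sum>m<n. Q m \<omega> - c)"
    for \<omega>
    using phi_SML_eq_quad_on[OF assms(4), of n "\<lambda>k. X k \<omega>" j, folded C_def c_def] c assms(1)
    by (simp add: Q_def sum_subtractf field_simps)
  have "(\<integral>\<omega>. (phi_SML Sigma n (\<lambda>k. X k \<omega>) j - phi Sigma j)^2 \<partial>M)
      = (phi Sigma j / (c * n))\<^sup>2 * (real n * (2 * c))"
    by (simp only: error power_mult_distrib integral_mult_right_zero variance)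
  also have "\<dots> = 2 * (phi Sigma j)^2 / (real n * c)"
    using c assms(1) by (simp add: power2_eq_square field_simps)
  finally show ?thesis by (simp add: c_def C_def comp_size_def component_def)
qed

end
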